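(* Let $g(x)=\sum_{n\ge 1}\frac{2\,(4n+1)!}{(n+1)!\,(3n+2)!}\,x^n$. Then $g$ satisfies, as a formal power series, the algebraic equation $$x(x^2+11x-1)+(4x^3+25x^2-14x+1)\,g(x)+x(6x^2+17x+3)\,g(x)^2+x^2(4x+3)\,g(x)^3+x^3\,g(x)^4=0.$$ Moreover the series converges at $x=\frac{27}{256}$ and $g\!\left(\frac{27}{256}\right)=\frac{5}{27}$. *)

theory Defs
  imports Complex_Main "HOL-Computational_Algebra.Formal_Power_Series"
begin

definition g_coeff :: "nat \<Rightarrow> real" where
  "g_coeff n = (if n = 0 then 0
     else 2 * fact (4*n+1) / (fact (n+1) * fact (3*n+2)))"

definition g_fps :: "real fps" where
  "g_fps = Abs_fps g_coeff"

end

(*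
  Let T be the power series with T = 1 + x T^4 (the generating function of quaternary
  trees). Then g = 2 T^2 - T^3 - 1: both sides vanish at 0, and the coefficients of
  2 T^2 - T^3 satisfy the first-order recurrence of the hypergeometric coefficients of g,
  because 2 T^2 - T^3 solves a third-order hypergeometric differential equation. That
  equation is checked by writing x d/dx = T (T - 1) / (4 - 3 T) d/dT, which follows from
  differentiating T = 1 + x T^4. Substituting x = (T - 1) / T^4 then turns the quartic
  relation into a polynomial identity in T.

  At x = 27/256, the radius of convergence, the coefficients obey (n + 1)^2 g_n x^n <= 1,
  so the series converges absolutely there. On absolutely convergent series evaluation is
  a ring homomorphism, so y = g(27/256) >= 0 is a root of the quartic at x = 27/256, which
  factors as x^3 (y - 5/27)^2 (y^2 + 886/27 y + 449); hence y = 5/27.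
*)
theory Submission
  imports Defs "HOL-Analysis.FPS_Convergence"
begin

unbundle no vec_syntax
unbundle fps_syntax

lemma fps_fixpoint_X_mult_power_exists:
  "\<exists>T :: 'a::field fps. T $ 0 = 1 \<and> T = 1 + fps_X * T ^ k"
proof -
  define W :: "'a fps" where "W = fps_X * inverse ((1 + fps_X) ^ k)"
  have W0: "W $ 0 = 0" and W1: "W $ 1 = 1"
    by (simp_all add: W_def fps_nth_power_0)
  define S where "S = fps_inv W"
  have S0: "S $ 0 = 0"
    by (simp add: S_def fps_inv_def)
  have "W oo S = S * inverse ((1 + S) ^ k)"
    unfolding W_def
    by (simp add: fps_compose_mult_distrib[OF S0] fps_inverse_compose[OF S0]
        fps_compose_power[OF S0, symmetric] fps_compose_add_distrib S0)
  moreover have "W oo S = fps_X"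
    unfolding S_def by (rule fps_inv_right) (use W0 W1 in auto)
  ultimately have "S * inverse ((1 + S) ^ k) = fps_X"
    by simp
  moreover have "inverse ((1 + S) ^ k) * (1 + S) ^ k = 1"
    by (rule inverse_mult_eq_1) (simp add: S0 fps_nth_power_0)
  ultimately have "S = fps_X * (1 + S) ^ k"
    by (metis mult.assoc mult.commute mult_1_right)
  then show ?thesis
    using S0 by (intro exI[of _ "1 + S"]) simp
qed

lemma fps_XD_mult: "fps_XD (f * g) = fps_XD f * g + f * fps_XD (g :: 'a::comm_ring_1 fps)"
  by (simp add: fps_XD_def algebra_simps)

lemma fps_XD_power: "fps_XD (f ^ n) = of_nat n * f ^ (n - 1) * fps_XD (f :: 'a::comm_ring_1 fps)"
  by (simp add: fps_XD_def fps_deriv_power' algebra_simps)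

lemma fps_XD_diff: "fps_XD (f - g) = fps_XD f - fps_XD (g :: 'a::comm_ring_1 fps)"
  by (simp add: fps_XD_def algebra_simps)

lemma fps_XD_numeral [simp]: "fps_XD (numeral k :: 'a::comm_ring_1 fps) = 0"
  by (simp add: fps_XD_def)

lemma fps_XD_one [simp]: "fps_XD (1 :: 'a::comm_ring_1 fps) = 0"
  by (simp add: fps_XD_def)

lemma fps_XD_X [simp]: "fps_XD (fps_X :: 'a::comm_ring_1 fps) = fps_X"
  by (simp add: fps_XD_def)

text \<open>With \<open>\<theta> = fps_XD\<close> this is
  \<open>3 (\<theta> + 1) (3\<theta> + 1) (3\<theta> + 2) - 4 x (4\<theta> + 2) (4\<theta> + 3) (4\<theta> + 5)\<close>, whose factors give
  the coefficient recurrence below.\<close>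

definition hypergeometric_op :: "'a::comm_ring_1 fps \<Rightarrow> 'a fps" where
  "hypergeometric_op F =
    3 * (9 * fps_XD (fps_XD (fps_XD F)) + 18 * fps_XD (fps_XD F) + 11 * fps_XD F + 2 * F)
    - 4 * fps_X * (64 * fps_XD (fps_XD (fps_XD F)) + 160 * fps_XD (fps_XD F) + 124 * fps_XD F + 30 * F)"

lemma quartic_tree_series_ode:
  fixes T :: "'a::field_char_0 fps"
  assumes T0: "T $ 0 = 1" and T_eq: "T = 1 + fps_X * T ^ 4"
  defines "F \<equiv> 2 * T\<^sup>2 - T ^ 3"
  shows "hypergeometric_op F = 6"
proof -
  define w where "w = 4 - 3 * T"
  define D1 D2 D3 where "D1 = fps_XD F" and "D2 = fps_XD D1" and "D3 = fps_XD D2"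
  have XT4: "fps_X * T ^ 4 = T - 1"
    using T_eq by (simp add: algebra_simps)
  have "fps_XD T = fps_XD (1 + fps_X * T ^ 4)"
    using T_eq by (rule arg_cong)
  then have "fps_XD T = fps_X * T ^ 4 + 4 * fps_X * T ^ 3 * fps_XD T"
    by (simp add: fps_XD_mult fps_XD_power algebra_simps)
  then have XD_T: "w * fps_XD T = T * (T - 1)"
    unfolding w_def using XT4 by algebra
  have D1_eq: "D1 = T\<^sup>2 * (T - 1)"
  proof -
    have "D1 = T * (w * fps_XD T)"
      by (simp add: D1_def F_def w_def fps_XD_diff fps_XD_mult fps_XD_power algebra_simps
          numeral_eq_Suc)
    then show ?thesis
      by (simp add: XD_T power2_eq_square algebra_simps)
  qed
  have D2_eq: "w * D2 = T\<^sup>2 * (T - 1) * (3 * T - 2)"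
  proof -
    have "D2 = (3 * T\<^sup>2 - 2 * T) * fps_XD T"
      by (simp add: D2_def D1_eq fps_XD_diff fps_XD_mult fps_XD_power algebra_simps numeral_eq_Suc)
    then show ?thesis
      using XD_T by algebra
  qed
  have D3_eq: "w ^ 3 * D3 = T\<^sup>2 * (T - 1) * (16 - 66 * T + 78 * T\<^sup>2 - 27 * T ^ 3)"
  proof -
    have "fps_XD (w * D2) = fps_XD (T\<^sup>2 * (T - 1) * (3 * T - 2))"
      using D2_eq by (rule arg_cong)
    then have "w * D3 - 3 * fps_XD T * D2 = (12 * T ^ 3 - 15 * T\<^sup>2 + 4 * T) * fps_XD T"
      by (simp add: D3_def w_def fps_XD_diff fps_XD_mult fps_XD_power algebra_simps numeral_eq_Suc)
    then show ?thesis
      using XD_T D2_eq unfolding w_def by algebra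
  qed
  txt \<open>Clearing the denominators \<open>T ^ 4\<close> of \<open>x\<close> and \<open>w ^ 3\<close> of \<open>\<theta>\<^sup>3 F\<close> leaves a
    polynomial identity in \<open>T\<close>.\<close>
  have "T ^ 4 * w ^ 3 * (hypergeometric_op F - 6)
      = 3 * T ^ 4 * (9 * (w ^ 3 * D3) + 18 * w\<^sup>2 * (w * D2) + 11 * w ^ 3 * D1 + 2 * w ^ 3 * F)
        - 4 * (fps_X * T ^ 4) * (64 * (w ^ 3 * D3) + 160 * w\<^sup>2 * (w * D2) + 124 * w ^ 3 * D1
        + 30 * w ^ 3 * F) - 6 * T ^ 4 * w ^ 3"
    unfolding hypergeometric_op_def D1_def D2_def D3_def by algebra
  also have "\<dots> = 0"
    unfolding D1_eq D2_eq D3_eq XT4 unfolding F_def w_def by algebra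
  finally have "T ^ 4 * w ^ 3 * (hypergeometric_op F - 6) = 0" .
  moreover have "T ^ 4 * w ^ 3 \<noteq> 0"
  proof -
    have "T \<noteq> 0" "w \<noteq> 0"
      using T0 by (auto simp: w_def fps_eq_iff intro!: exI[of _ 0])
    then show ?thesis
      by simp
  qed
  ultimately show ?thesis
    by simp
qed

lemma quartic_tree_series_algebraic:
  fixes T :: "'a::field_char_0 fps"
  assumes T0: "T $ 0 = 1" and T_eq: "T = 1 + fps_X * T ^ 4"
  defines "G \<equiv> 2 * T\<^sup>2 - T ^ 3 - 1"
  shows "fps_X * (fps_X\<^sup>2 + 11 * fps_X - 1)
         + (4 * fps_X^3 + 25 * fps_X\<^sup>2 - 14 * fps_X + 1) * G
         + fps_X * (6 * fps_X\<^sup>2 + 17 * fps_X + 3) * G\<^sup>2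
         + fps_X\<^sup>2 * (4 * fps_X + 3) * G^3
         + fps_X^3 * G^4 = 0"
    (is "?Q = 0")
proof -
  have XT4: "fps_X * T ^ 4 = T - 1"
    using T_eq by (simp add: algebra_simps)
  have "T ^ 12 * ?Q = 0"
    using XT4 unfolding G_def by algebra
  moreover have "T \<noteq> 0"
    using T0 by auto
  ultimately show ?thesis
    by simp
qed

lemma hypergeometric_op_eq_6_coeff_recurrence:
  fixes F :: "'a::comm_ring_1 fps"
  assumes "hypergeometric_op F = 6"
  shows "3 * (of_nat n + 2) * (3 * of_nat n + 4) * (3 * of_nat n + 5) * F $ Suc n
    = 4 * (4 * of_nat n + 2) * (4 * of_nat n + 3) * (4 * of_nat n + 5) * F $ n"
proof -
  have "hypergeometric_op F $ Suc n = (6 :: 'a fps) $ Suc n"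
    using assms by (rule arg_cong)
  then show ?thesis
    unfolding hypergeometric_op_def numeral_fps_const by (simp add: mult.assoc) (simp add: algebra_simps)
qed

definition g_coeff_formula :: "nat \<Rightarrow> real" where
  "g_coeff_formula n = 2 * fact (4 * n + 1) / (fact (n + 1) * fact (3 * n + 2))"

lemma g_coeff_formula_pos: "g_coeff_formula n > 0"
  by (simp add: g_coeff_formula_def)

lemma g_coeff_formula_Suc:
  "3 * (real n + 2) * (3 * real n + 4) * (3 * real n + 5) * g_coeff_formula (Suc n)
    = 4 * (4 * real n + 2) * (4 * real n + 3) * (4 * real n + 5) * g_coeff_formula n"
proof -
  define x A B C :: real
    where "x = real n" and "A = fact (4 * n + 1)" and "B = fact (n + 1)" and "C = fact (3 * n + 2)"
  have "4 * Suc n + 1 = Suc (Suc (Suc (Suc (4 * n + 1))))" "Suc n + 1 = Suc (n + 1)"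
    "3 * Suc n + 2 = Suc (Suc (Suc (3 * n + 2)))"
    by simp_all
  then have Suc_eq: "g_coeff_formula (Suc n) = 2 * ((4 * x + 5) * (4 * x + 4) * (4 * x + 3) * (4 * x + 2) * A)
      / ((x + 2) * B * ((3 * x + 5) * (3 * x + 4) * (3 * x + 3) * C))"
    unfolding g_coeff_formula_def x_def A_def B_def C_def
    by (simp only: fact_Suc) (simp add: algebra_simps)
  have n_eq: "g_coeff_formula n = 2 * A / (B * C)"
    by (simp add: g_coeff_formula_def A_def B_def C_def)
  have "B \<noteq> 0" "C \<noteq> 0" "x + 2 > 0" "3 * x + 3 > 0" "3 * x + 4 > 0" "3 * x + 5 > 0"
    by (simp_all add: x_def B_def C_def add_nonneg_pos)
  then show ?thesis
    unfolding Suc_eq n_eq x_def[symmetric] by (simp add: divide_simps) (simp add: ring_distribs)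
qed

lemma quartic_tree_series_coeff:
  fixes T :: "real fps"
  assumes T0: "T $ 0 = 1" and T_eq: "T = 1 + fps_X * T ^ 4"
  shows "(2 * T\<^sup>2 - T ^ 3) $ n = g_coeff_formula n"
proof (induction n)
  case 0
  show ?case
    using T0 by (simp add: g_coeff_formula_def fps_nth_power_0)
next
  case (Suc n)
  have "3 * (real n + 2) * (3 * real n + 4) * (3 * real n + 5) * (2 * T\<^sup>2 - T ^ 3) $ Suc n
      = 4 * (4 * real n + 2) * (4 * real n + 3) * (4 * real n + 5) * (2 * T\<^sup>2 - T ^ 3) $ n"
    by (rule hypergeometric_op_eq_6_coeff_recurrence[OF quartic_tree_series_ode[OF T0 T_eq]])
  also have "\<dots> = 3 * (real n + 2) * (3 * real n + 4) * (3 * real n + 5) * g_coeff_formula (Suc n)"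
    unfolding Suc.IH by (rule g_coeff_formula_Suc[symmetric])
  finally show ?case
    by (simp add: add_pos_pos)
qed

lemma g_fps_eq_quartic_tree_series:
  fixes T :: "real fps"
  assumes "T $ 0 = 1" and "T = 1 + fps_X * T ^ 4"
  shows "g_fps = 2 * T\<^sup>2 - T ^ 3 - 1"
proof (rule fps_ext)
  fix n
  show "g_fps $ n = (2 * T\<^sup>2 - T ^ 3 - 1) $ n"
    using quartic_tree_series_coeff[OF assms, of n]
    by (cases "n = 0") (simp_all add: g_fps_def g_coeff_def g_coeff_formula_def)
qed

text \<open>The library rules for \<^const>\<open>eval_fps\<close> require \<open>norm z < fps_conv_radius f\<close>;
  absolute summability is what makes evaluation multiplicative on the boundary circle.\<close>

definition fps_abs_summable_at :: "'a::{banach,real_normed_div_algebra} fps \<Rightarrow> 'a \<Rightarrow> bool" where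
  "fps_abs_summable_at f z \<longleftrightarrow> summable (\<lambda>n. norm (f $ n * z ^ n))"

context
  fixes z :: "'a::{banach,real_normed_field}"
begin

lemma fps_abs_summable_at_const [simp]: "fps_abs_summable_at (fps_const c) z"
  unfolding fps_abs_summable_at_def by (rule summable_finite[of "{0}"]) auto

lemma fps_abs_summable_at_numeral [simp]: "fps_abs_summable_at (numeral k) z"
  using fps_abs_summable_at_const[of "numeral k"] by (simp flip: numeral_fps_const)

lemma fps_abs_summable_at_one [simp]: "fps_abs_summable_at 1 z"
  using fps_abs_summable_at_const[of 1] by simp

lemma fps_abs_summable_at_X [simp]: "fps_abs_summable_at fps_X z"
  unfolding fps_abs_summable_at_def by (rule summable_finite[of "{1}"]) auto

lemma fps_abs_summable_at_add [simp]:
  assumes "fps_abs_summable_at f z" and "fps_abs_summable_at g z"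
  shows "fps_abs_summable_at (f + g) z"
  unfolding fps_abs_summable_at_def
proof (rule summable_comparison_test'[OF summable_add[OF assms[unfolded fps_abs_summable_at_def]]])
  fix n
  show "norm (norm ((f + g) $ n * z ^ n)) \<le> norm (f $ n * z ^ n) + norm (g $ n * z ^ n)"
    by (simp add: distrib_right norm_triangle_ineq)
qed

lemma fps_abs_summable_at_uminus [simp]: "fps_abs_summable_at (- f) z = fps_abs_summable_at f z"
  by (simp add: fps_abs_summable_at_def)

lemma fps_abs_summable_at_diff [simp]:
  "fps_abs_summable_at f z \<Longrightarrow> fps_abs_summable_at g z \<Longrightarrow> fps_abs_summable_at (f - g) z"
  using fps_abs_summable_at_add[of f "- g"] by simp

lemma fps_mult_nth_times_power:
  "(f * g) $ n * z ^ n = (\<Sum>i\<le>n. (f $ i * z ^ i) * (g $ (n - i) * z ^ (n - i)))"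
  unfolding fps_mult_nth atLeast0AtMost sum_distrib_right
  by (rule sum.cong) (auto simp: mult_ac simp flip: power_add)

lemma fps_abs_summable_at_mult [simp]:
  assumes "fps_abs_summable_at f z" and "fps_abs_summable_at g z"
  shows "fps_abs_summable_at (f * g) z"
  unfolding fps_abs_summable_at_def
proof (rule summable_comparison_test')
  show "summable (\<lambda>n. \<Sum>i\<le>n. norm (f $ i * z ^ i) * norm (g $ (n - i) * z ^ (n - i)))"
    using assms unfolding fps_abs_summable_at_def by (intro summable_Cauchy_product) simp_all
  fix n
  show "norm (norm ((f * g) $ n * z ^ n))
      \<le> (\<Sum>i\<le>n. norm (f $ i * z ^ i) * norm (g $ (n - i) * z ^ (n - i)))"
    unfolding fps_mult_nth_times_power by (simp add: norm_sum[THEN order_trans] norm_mult)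
qed

lemma fps_abs_summable_at_power [simp]: "fps_abs_summable_at f z \<Longrightarrow> fps_abs_summable_at (f ^ n) z"
  by (induction n) simp_all

lemma fps_abs_summable_at_summable: "fps_abs_summable_at f z \<Longrightarrow> summable (\<lambda>n. f $ n * z ^ n)"
  unfolding fps_abs_summable_at_def by (rule summable_norm_cancel)

lemma eval_fps_add_abs_summable:
  "fps_abs_summable_at f z \<Longrightarrow> fps_abs_summable_at g z
    \<Longrightarrow> eval_fps (f + g) z = eval_fps f z + eval_fps g z"
  unfolding eval_fps_def by (simp add: distrib_right suminf_add fps_abs_summable_at_summable)

lemma eval_fps_diff_abs_summable:
  "fps_abs_summable_at f z \<Longrightarrow> fps_abs_summable_at g z
    \<Longrightarrow> eval_fps (f - g) z = eval_fps f z - eval_fps g z"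
  unfolding eval_fps_def by (simp add: left_diff_distrib suminf_diff fps_abs_summable_at_summable)

lemma eval_fps_mult_abs_summable:
  assumes "fps_abs_summable_at f z" and "fps_abs_summable_at g z"
  shows "eval_fps (f * g) z = eval_fps f z * eval_fps g z"
  using Cauchy_product[OF assms[unfolded fps_abs_summable_at_def]]
  unfolding eval_fps_def fps_mult_nth_times_power by simp

lemma eval_fps_power_abs_summable:
  "fps_abs_summable_at f z \<Longrightarrow> eval_fps (f ^ n) z = eval_fps f z ^ n"
  by (induction n) (simp_all add: eval_fps_mult_abs_summable)

end

lemma g_coeff_formula_bound: "(real n + 1)\<^sup>2 * (g_coeff_formula n * (27/256) ^ n) \<le> 1"
proof (induction n)
  case 0
  show ?case
    by (simp add: g_coeff_formula_def)
next
  case (Suc n)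
  define x where "x = real n"
  define P where "P = 3 * (x + 2) * (3 * x + 4) * (3 * x + 5)"
  have x0: "x \<ge> 0" and P0: "P > 0"
    by (simp_all add: x_def P_def add_pos_pos)
  have ratio: "(x + 2)\<^sup>2 * (4 * (4 * x + 2) * (4 * x + 3) * (4 * x + 5)) * (27/256) \<le> P * (x + 1)\<^sup>2"
  proof -
    have "P * (x + 1)\<^sup>2 - (x + 2)\<^sup>2 * (4 * (4 * x + 2) * (4 * x + 3) * (4 * x + 5)) * (27/256)
        = (x + 2) * (3/64) * (288 * x ^ 3 + 1316 * x\<^sup>2 + 1786 * x + 740)"
      unfolding P_def by algebra
    also have "\<dots> \<ge> 0"
      using x0 by simp
    finally show ?thesis
      by simp
  qed
  have rec: "P * g_coeff_formula (Suc n) = 4 * (4 * x + 2) * (4 * x + 3) * (4 * x + 5) * g_coeff_formula n"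
    unfolding P_def x_def by (rule g_coeff_formula_Suc)
  have "P * ((x + 2)\<^sup>2 * (g_coeff_formula (Suc n) * (27/256) ^ Suc n))
      = (x + 2)\<^sup>2 * (P * g_coeff_formula (Suc n)) * (27/256) * (27/256) ^ n"
    by (simp add: algebra_simps)
  also have "\<dots> = (x + 2)\<^sup>2 * (4 * (4 * x + 2) * (4 * x + 3) * (4 * x + 5)) * (27/256)
        * (g_coeff_formula n * (27/256) ^ n)"
    unfolding rec by (simp add: algebra_simps)
  also have "\<dots> \<le> P * (x + 1)\<^sup>2 * (g_coeff_formula n * (27/256) ^ n)"
    by (rule mult_right_mono[OF ratio]) (simp add: less_imp_le[OF g_coeff_formula_pos])
  also have "\<dots> \<le> P"
    using Suc.IH P0 unfolding x_def by (simp add: mult.assoc)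
  finally have "(x + 2)\<^sup>2 * (g_coeff_formula (Suc n) * (27/256) ^ Suc n) \<le> 1"
    using P0 by (simp add: mult_le_cancel_left_pos)
  then show ?case
    by (simp add: x_def add.commute add.left_commute)
qed

lemma fps_abs_summable_at_g_fps: "fps_abs_summable_at g_fps (27/256 :: real)"
  unfolding fps_abs_summable_at_def
proof (rule summable_comparison_test')
  show "summable (\<lambda>n. inverse (real (Suc n) ^ 2))"
    using summable_Suc_iff[of "\<lambda>n. inverse (real n ^ 2)"] inverse_power_summable[of 2, where 'a=real]
    by simp
  fix n
  have "g_coeff n \<le> g_coeff_formula n"
    using g_coeff_formula_pos[of n] by (simp add: g_coeff_def g_coeff_formula_def)
  then have "g_coeff n * (27/256) ^ n \<le> g_coeff_formula n * (27/256) ^ n"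
    by (simp add: mult_right_mono)
  also have "\<dots> \<le> inverse (real (Suc n) ^ 2)"
    using g_coeff_formula_bound[of n] by (simp add: field_simps)
  finally show "norm (norm (g_fps $ n * (27/256) ^ n)) \<le> inverse (real (Suc n) ^ 2)"
    by (simp add: g_fps_def g_coeff_def)
qed

lemma quartic_at_27_256_nonneg_root:
  fixes y :: real
  defines "r \<equiv> 27/256 :: real"
  assumes y0: "y \<ge> 0"
    and root: "r * (r\<^sup>2 + 11 * r - 1) + (4 * r ^ 3 + 25 * r\<^sup>2 - 14 * r + 1) * y
      + r * (6 * r\<^sup>2 + 17 * r + 3) * y\<^sup>2 + r\<^sup>2 * (4 * r + 3) * y ^ 3 + r ^ 3 * y ^ 4 = 0"
  shows "y = 5/27"
proof -
  have "r * (r\<^sup>2 + 11 * r - 1) + (4 * r ^ 3 + 25 * r\<^sup>2 - 14 * r + 1) * y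
      + r * (6 * r\<^sup>2 + 17 * r + 3) * y\<^sup>2 + r\<^sup>2 * (4 * r + 3) * y ^ 3 + r ^ 3 * y ^ 4
      = r ^ 3 * ((y - 5/27)\<^sup>2 * (y\<^sup>2 + 886/27 * y + 449))"
    unfolding r_def by algebra
  moreover have "y\<^sup>2 + 886/27 * y + 449 > 0"
    using y0 by (simp add: add_nonneg_pos)
  ultimately show ?thesis
    using root by (simp add: r_def)
qed

theorem mainTheorem4:
  shows "(fps_X * (fps_X\<^sup>2 + 11 * fps_X - 1)
         + (4 * fps_X^3 + 25 * fps_X\<^sup>2 - 14 * fps_X + 1) * g_fps
         + fps_X * (6 * fps_X\<^sup>2 + 17 * fps_X + 3) * g_fps\<^sup>2
         + fps_X\<^sup>2 * (4 * fps_X + 3) * g_fps^3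
         + fps_X^3 * g_fps^4 = 0)
    \<and> ((\<lambda>n. g_coeff n * (27/256)^n) sums (5/27))"
    (is "?Q = 0 \<and> ?sums")
proof
  obtain T :: "real fps" where T0: "T $ 0 = 1" and T_eq: "T = 1 + fps_X * T ^ 4"
    using fps_fixpoint_X_mult_power_exists by blast
  show "?Q = 0"
    unfolding g_fps_eq_quartic_tree_series[OF T0 T_eq]
    by (rule quartic_tree_series_algebraic[OF T0 T_eq])
  then have "eval_fps ?Q (27/256) = 0"
    by (simp only: eval_fps_0)
  moreover have "eval_fps g_fps (27/256) \<ge> 0"
    unfolding eval_fps_def
    using fps_abs_summable_at_summable[OF fps_abs_summable_at_g_fps]
    by (rule suminf_nonneg) (simp add: g_fps_def g_coeff_def)
  ultimately have eval_g: "eval_fps g_fps (27/256) = 5/27"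
    using fps_abs_summable_at_g_fps
    by (intro quartic_at_27_256_nonneg_root) (simp_all add: eval_fps_add_abs_summable
        eval_fps_diff_abs_summable eval_fps_mult_abs_summable eval_fps_power_abs_summable)
  have "(\<lambda>n. g_fps $ n * (27/256) ^ n) sums eval_fps g_fps (27/256)"
    unfolding eval_fps_def
    by (rule summable_sums[OF fps_abs_summable_at_summable[OF fps_abs_summable_at_g_fps]])
  then show ?sums
    unfolding eval_g by (simp add: g_fps_def)
qed

end
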